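(* If $\omega\in\Lambda^s(n,n;r)$ and $\pi\in\Lambda^t(n,n;r)$, then $\xi_\omega\xi_\pi\in J^R_{s+t}(n,r)$.
   Context: $R$ commutative ring with identity, $n,r$ positive integers. $I(n,r)=\{1,\dots,n\}^r$; $\Lambda(n,n;r)$: $n\times n$ matrices of nonnegative integers with total sum $r$. For $i,j\in I(n,r)$, $\operatorname{wt}(i,j)_{st}=\#\{q:i_q=s,j_q=t\}$, $(i,j)\in\omega$ means $\operatorname{wt}(i,j)=\omega$. $S_R(n,r)=\mathrm{End}_{R\Sigma_r}((R^n)^{\otimes r})$ ($\Sigma_r$ permuting tensor positions: $e_i\sigma=e_{i\sigma}$, $(i\sigma)_q=i_{\sigma(q)}$); $\xi_\omega=\sum_{(i,j)\in\omega}e_{i,j}$, where $e_{i,j}e_k=\delta_{jk}e_i$. For $s\ge0$, $\Lambda^s(n,n;r)$ is the set of upper triangular $\omega\in\Lambda(n,n;r)$ with $\sum_{1\le k\le l\le n}(l-k)\omega_{kl}\ge s$, and $J^R_s(n,r)$ is the $R$-submodule of $S_R(n,r)$ spanned by $\{\xi_\omega:\omega\in\Lambda^s(n,n;r)\}$. *)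

theory Defs
  imports Main
begin

definition Iset :: "nat \<Rightarrow> nat \<Rightarrow> nat list set" where
  "Iset n r = {i. length i = r \<and> set i \<subseteq> {1..n}}"

definition wt :: "nat list \<Rightarrow> nat list \<Rightarrow> nat \<Rightarrow> nat \<Rightarrow> nat" where
  "wt i j s t = card {q. q < length i \<and> i ! q = s \<and> j ! q = t}"

definition Lambda :: "nat \<Rightarrow> nat \<Rightarrow> (nat \<Rightarrow> nat \<Rightarrow> nat) set" where
  "Lambda n r = {\<omega>. (\<forall>k l. \<omega> k l \<noteq> 0 \<longrightarrow> k \<in> {1..n} \<and> l \<in> {1..n})
                    \<and> (\<Sum>k=1..n. \<Sum>l=1..n. \<omega> k l) = r}"

definition Lambda_s :: "nat \<Rightarrow> nat \<Rightarrow> nat \<Rightarrow> (nat \<Rightarrow> nat \<Rightarrow> nat) set" where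
  "Lambda_s s n r = {\<omega> \<in> Lambda n r. (\<forall>k l. l < k \<longrightarrow> \<omega> k l = 0)
        \<and> (\<Sum>k=1..n. \<Sum>l=k..n. (l - k) * \<omega> k l) \<ge> s}"

text \<open>Elements of End_R((R^n)^{\<otimes>r}) are represented by their matrices w.r.t. the
  basis e_i (i in I(n,r)); entries outside I(n,r) x I(n,r) are zero.
  xi_omega = sum_{(i,j) in omega} e_{i,j}.\<close>
definition xi :: "nat \<Rightarrow> nat \<Rightarrow> (nat \<Rightarrow> nat \<Rightarrow> nat) \<Rightarrow> nat list \<Rightarrow> nat list \<Rightarrow> 'a::comm_ring_1" where
  "xi n r \<omega> i j = (if i \<in> Iset n r \<and> j \<in> Iset n r \<and> wt i j = \<omega> then 1 else 0)"

text \<open>Product (composition) of endomorphisms: e_{i,j} e_{k,l} = delta_{jk} e_{i,l}.\<close>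
definition emult :: "nat \<Rightarrow> nat \<Rightarrow> (nat list \<Rightarrow> nat list \<Rightarrow> 'a::comm_ring_1)
     \<Rightarrow> (nat list \<Rightarrow> nat list \<Rightarrow> 'a) \<Rightarrow> nat list \<Rightarrow> nat list \<Rightarrow> 'a" where
  "emult n r A B = (\<lambda>i l. \<Sum>j\<in>Iset n r. A i j * B j l)"

definition J :: "nat \<Rightarrow> nat \<Rightarrow> nat \<Rightarrow> (nat list \<Rightarrow> nat list \<Rightarrow> 'a::comm_ring_1) set" where
  "J s n r = {M. \<exists>c :: (nat \<Rightarrow> nat \<Rightarrow> nat) \<Rightarrow> 'a.
      M = (\<lambda>i j. \<Sum>\<omega>\<in>Lambda_s s n r. c \<omega> * xi n r \<omega> i j)}"

end

theory Submission
  imports Defs "HOL-Combinatorics.Permutations"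
begin

text \<open>The product \<open>\<xi>\<^sub>\<omega>\<xi>\<^sub>\<pi>\<close> commutes with the place permutations, so its
  \<open>(i,l)\<close>-entry depends only on \<open>wt(i,l)\<close>; hence it is a linear combination of the \<open>\<xi>\<^sub>\<theta>\<close>
  with \<open>\<theta> = wt(i,l)\<close> running over its support. If that entry is nonzero there is a \<open>j\<close>
  with \<open>wt(i,j) = \<omega>\<close> and \<open>wt(j,l) = \<pi>\<close>. Upper triangularity gives \<open>i\<^sub>q \<le> j\<^sub>q \<le> l\<^sub>q\<close> for
  every position \<open>q\<close>, so \<open>wt(i,l)\<close> is upper triangular, and its degree
  \<open>\<Sum>\<^sub>q (l\<^sub>q - i\<^sub>q) = \<Sum>\<^sub>q (j\<^sub>q - i\<^sub>q) + \<Sum>\<^sub>q (l\<^sub>q - j\<^sub>q)\<close> is at least \<open>s + t\<close>.\<close>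

lemma finite_Iset: "finite (Iset n r)"
proof -
  have "Iset n r = {xs. set xs \<subseteq> {1..n} \<and> length xs = r}"
    unfolding Iset_def by auto
  then show ?thesis
    using finite_lists_length_eq[of "{1..n}" r] by simp
qed

lemma permute_list_in_Iset_iff:
  assumes "f permutes {..<r}"
  shows "permute_list f i \<in> Iset n r \<longleftrightarrow> i \<in> Iset n r"
  using assms by (auto simp: Iset_def)

lemma bij_betw_permute_list_Iset:
  assumes f: "f permutes {..<r}"
  shows "bij_betw (permute_list f) (Iset n r) (Iset n r)"
proof (rule bij_betw_byWitness[where f' = "permute_list (inv f)"])
  have f_inv: "inv f permutes {..<r}"
    using f by (rule permutes_inv)
  show "\<forall>i\<in>Iset n r. permute_list (inv f) (permute_list f i) = i"
    using f f_inv by (auto simp: Iset_def permutes_inv_o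
        simp flip: permute_list_compose)
  show "\<forall>i\<in>Iset n r. permute_list f (permute_list (inv f) i) = i"
    using f f_inv by (auto simp: Iset_def permutes_inv_o
        simp flip: permute_list_compose)
  show "permute_list f ` Iset n r \<subseteq> Iset n r"
    "permute_list (inv f) ` Iset n r \<subseteq> Iset n r"
    using f f_inv by (auto simp: permute_list_in_Iset_iff)
qed

lemma wt_eq_count_zip:
  assumes "length i = length j"
  shows "wt i j s t = count (mset (zip i j)) (s, t)"
proof -
  have "{q. q < length (zip i j) \<and> (s, t) = zip i j ! q}
      = {q. q < length i \<and> i ! q = s \<and> j ! q = t}"
    using assms by auto
  then show ?thesis
    by (simp add: wt_def count_mset count_list_eq_length_filter length_filter_conv_card)
qed

lemma wt_eq_iff_mset_zip:
  assumes "length i = length j" "length i' = length j'"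
  shows "wt i j = wt i' j' \<longleftrightarrow> mset (zip i j) = mset (zip i' j')"
  using assms by (auto simp: fun_eq_iff multiset_eq_iff wt_eq_count_zip)

lemma wt_permute_list:
  assumes "f permutes {..<length i}" "length j = length i"
  shows "wt (permute_list f i) (permute_list f j) = wt i j"
  using assms by (simp add: wt_eq_iff_mset_zip flip: permute_list_zip)

lemma wt_eq_obtains_permutation:
  assumes "length i = length j" "length i' = length j'" "wt i j = wt i' j'"
  obtains f where "f permutes {..<length i'}"
    and "permute_list f i' = i" and "permute_list f j' = j"
proof -
  have "mset (zip i j) = mset (zip i' j')"
    using assms by (simp add: wt_eq_iff_mset_zip)
  then obtain f where f: "f permutes {..<length (zip i' j')}"
    and "permute_list f (zip i' j') = zip i j"
    by (rule mset_eq_permutation)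
  moreover have "length i = length i'"
    using mset_eq_length[OF \<open>mset (zip i j) = mset (zip i' j')\<close>] assms by simp
  ultimately have "zip (permute_list f i') (permute_list f j') = zip i j"
    using assms by (simp add: permute_list_zip)
  then have "permute_list f i' = i \<and> permute_list f j' = j"
    using assms \<open>length i = length i'\<close> by (simp add: zip_eq_conv map_fst_zip map_snd_zip)
  with f assms show thesis
    by (intro that) auto
qed

lemma wt_nth_nth_pos:
  assumes "q < length i"
  shows "0 < wt i j (i ! q) (j ! q)"
  using assms by (auto simp: wt_def card_gt_0_iff)

lemma wt_nonzero_obtains_position:
  assumes "wt i j k l \<noteq> 0"
  obtains q where "q < length i" "i ! q = k" "j ! q = l"
proof -
  have "{q. q < length i \<and> i ! q = k \<and> j ! q = l} \<noteq> {}"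
    using assms by (auto simp: wt_def)
  then show thesis
    using that by blast
qed

lemma sum_wt:
  fixes g :: "nat \<Rightarrow> nat \<Rightarrow> nat"
  assumes "finite A" "finite B" "set i \<subseteq> A" "set j \<subseteq> B" "length j = length i"
  shows "(\<Sum>k\<in>A. \<Sum>l\<in>B. g k l * wt i j k l) = (\<Sum>q<length i. g (i ! q) (j ! q))"
proof -
  have wt_sum: "wt i j k l = (\<Sum>q<length i. if i ! q = k \<and> j ! q = l then 1 else 0)" for k l
    by (simp add: wt_def sum.If_cases Int_def lessThan_def conj_commute)
  have position: "i ! q \<in> A" "j ! q \<in> B" if "q < length i" for q
  proof -
    have "i ! q \<in> set i" "j ! q \<in> set j"
      using that assms(5) by simp_all
    then show "i ! q \<in> A" "j ! q \<in> B"
      using assms(3,4) by blast+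
  qed
  have "(\<Sum>k\<in>A. \<Sum>l\<in>B. g k l * wt i j k l)
      = (\<Sum>k\<in>A. \<Sum>l\<in>B. \<Sum>q<length i. if i ! q = k \<and> j ! q = l then g k l else 0)"
    by (simp add: wt_sum sum_distrib_left if_distrib cong: if_cong)
  also have "\<dots> = (\<Sum>q<length i. \<Sum>k\<in>A. \<Sum>l\<in>B. if i ! q = k \<and> j ! q = l then g k l else 0)"
    by (simp only: sum.swap[where B = "{..<length i}"])
  also have "\<dots> = (\<Sum>q<length i. g (i ! q) (j ! q))"
  proof (rule sum.cong[OF refl])
    fix q assume "q \<in> {..<length i}"
    then have "i ! q \<in> A" "j ! q \<in> B"
      using position by auto
    then have "(\<Sum>l\<in>B. if i ! q = k \<and> j ! q = l then g k l else 0)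
        = (if i ! q = k then g k (j ! q) else 0)" for k
      using assms(2) by (simp add: sum.delta)
    then show "(\<Sum>k\<in>A. \<Sum>l\<in>B. if i ! q = k \<and> j ! q = l then g k l else 0) = g (i ! q) (j ! q)"
      using \<open>i ! q \<in> A\<close> assms(1) by (simp add: sum.delta)
  qed
  finally show ?thesis .
qed

lemma wt_in_Lambda:
  assumes "i \<in> Iset n r" "j \<in> Iset n r"
  shows "wt i j \<in> Lambda n r"
proof -
  have "k \<in> {1..n} \<and> l \<in> {1..n}" if nonzero: "wt i j k l \<noteq> 0" for k l
  proof -
    obtain q where q: "q < length i" "i ! q = k" "j ! q = l"
      by (rule wt_nonzero_obtains_position[OF nonzero])
    then have "k \<in> set i" "l \<in> set j"
      using assms by (auto simp: Iset_def)
    then show ?thesis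
      using assms by (auto simp: Iset_def)
  qed
  moreover have "(\<Sum>k=1..n. \<Sum>l=1..n. wt i j k l) = r"
    using sum_wt[of "{1..n}" "{1..n}" i j "\<lambda>_ _. 1"] assms by (simp add: Iset_def)
  ultimately show ?thesis
    by (simp add: Lambda_def)
qed

lemma finite_Lambda: "finite (Lambda n r)"
proof -
  define rows where "rows = {g :: nat \<Rightarrow> nat. \<forall>l. (l \<in> {1..n} \<longrightarrow> g l \<in> {0..r})
                                                \<and> (l \<notin> {1..n} \<longrightarrow> g l = 0)}"
  have "finite rows"
    unfolding rows_def by (intro finite_set_of_finite_funs) auto
  then have "finite {\<omega>. \<forall>k. (k \<in> {1..n} \<longrightarrow> \<omega> k \<in> rows) \<and> (k \<notin> {1..n} \<longrightarrow> \<omega> k = (\<lambda>_. 0))}"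
    by (intro finite_set_of_finite_funs) auto
  moreover have "Lambda n r
      \<subseteq> {\<omega>. \<forall>k. (k \<in> {1..n} \<longrightarrow> \<omega> k \<in> rows) \<and> (k \<notin> {1..n} \<longrightarrow> \<omega> k = (\<lambda>_. 0))}"
  proof (clarify, intro conjI impI)
    fix \<omega> k assume \<omega>: "\<omega> \<in> Lambda n r"
    have entry_le: "\<omega> k l \<le> r" if "k \<in> {1..n}" "l \<in> {1..n}" for l
    proof -
      have "\<omega> k l \<le> (\<Sum>l'=1..n. \<omega> k l')"
        using that by (intro member_le_sum) auto
      also have "\<dots> \<le> (\<Sum>k'=1..n. \<Sum>l'=1..n. \<omega> k' l')"
        using that by (intro member_le_sum[where f = "\<lambda>k'. \<Sum>l'=1..n. \<omega> k' l'"]) auto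
      finally show ?thesis
        using \<omega> by (simp add: Lambda_def)
    qed
    show "\<omega> k \<in> rows" if "k \<in> {1..n}"
      using \<omega> entry_le that by (auto simp: rows_def Lambda_def)
    show "\<omega> k = (\<lambda>_. 0)" if "k \<notin> {1..n}"
      using \<omega> that by (auto simp: Lambda_def)
  qed
  ultimately show ?thesis
    by (rule finite_subset[rotated])
qed

lemma finite_Lambda_s: "finite (Lambda_s s n r)"
  using finite_Lambda by (simp add: Lambda_s_def)

lemma nth_le_nth_if_wt_in_Lambda_s:
  assumes "wt i j \<in> Lambda_s s n r" "q < length i"
  shows "i ! q \<le> j ! q"
proof (rule ccontr)
  assume "\<not> i ! q \<le> j ! q"
  then have "wt i j (i ! q) (j ! q) = 0"
    using assms(1) by (simp add: Lambda_s_def)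
  with wt_nth_nth_pos[OF assms(2), of j] show False
    by simp
qed

text \<open>The inner sum may run over all of \<open>{1..n}\<close> because \<open>l - k = 0\<close> for \<open>l < k\<close>.\<close>
lemma degree_wt:
  assumes "i \<in> Iset n r" "j \<in> Iset n r"
  shows "(\<Sum>k=1..n. \<Sum>l=k..n. (l - k) * wt i j k l) = (\<Sum>q<r. j ! q - i ! q)"
proof -
  have "(\<Sum>l=k..n. (l - k) * wt i j k l) = (\<Sum>l=1..n. (l - k) * wt i j k l)"
    if "k \<in> {1..n}" for k
    using that by (intro sum.mono_neutral_left) auto
  then have "(\<Sum>k=1..n. \<Sum>l=k..n. (l - k) * wt i j k l)
      = (\<Sum>k=1..n. \<Sum>l=1..n. (l - k) * wt i j k l)"
    by (rule sum.cong[OF refl])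
  also have "\<dots> = (\<Sum>q<r. j ! q - i ! q)"
    using sum_wt[of "{1..n}" "{1..n}" i j "\<lambda>k l. l - k"] assms by (simp add: Iset_def)
  finally show ?thesis .
qed

lemma wt_in_Lambda_s_add:
  assumes I: "i \<in> Iset n r" "j \<in> Iset n r" "l \<in> Iset n r"
    and ij: "wt i j \<in> Lambda_s s n r" and jl: "wt j l \<in> Lambda_s t n r"
  shows "wt i l \<in> Lambda_s (s + t) n r"
proof -
  have len: "length i = r" "length j = r"
    using I by (simp_all add: Iset_def)
  have le_ij: "i ! q \<le> j ! q" and le_jl: "j ! q \<le> l ! q" if "q < r" for q
    using nth_le_nth_if_wt_in_Lambda_s[OF ij] nth_le_nth_if_wt_in_Lambda_s[OF jl] that len
    by simp_all
  have upper: "wt i l k m = 0" if "m < k" for k m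
  proof (rule ccontr)
    assume "wt i l k m \<noteq> 0"
    then obtain q where "q < length i" "i ! q = k" "l ! q = m"
      by (rule wt_nonzero_obtains_position)
    then show False
      using le_ij[of q] le_jl[of q] \<open>m < k\<close> len by simp
  qed
  have "(\<Sum>k=1..n. \<Sum>m=k..n. (m - k) * wt i l k m) = (\<Sum>q<r. l ! q - i ! q)"
    by (rule degree_wt[OF I(1,3)])
  also have "\<dots> = (\<Sum>q<r. (j ! q - i ! q) + (l ! q - j ! q))"
    using le_ij le_jl by (intro sum.cong) auto
  also have "\<dots> = (\<Sum>q<r. j ! q - i ! q) + (\<Sum>q<r. l ! q - j ! q)"
    by (rule sum.distrib)
  also have "\<dots> = (\<Sum>k=1..n. \<Sum>m=k..n. (m - k) * wt i j k m)
                 + (\<Sum>k=1..n. \<Sum>m=k..n. (m - k) * wt j l k m)"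
    by (simp only: degree_wt[OF I(1,2)] degree_wt[OF I(2,3)])
  finally have
    "(\<Sum>k=1..n. \<Sum>m=k..n. (m - k) * wt i l k m)
      = (\<Sum>k=1..n. \<Sum>m=k..n. (m - k) * wt i j k m) + (\<Sum>k=1..n. \<Sum>m=k..n. (m - k) * wt j l k m)" .
  with ij jl upper wt_in_Lambda[OF I(1,3)] show ?thesis
    by (auto simp: Lambda_s_def)
qed

lemma xi_permute_list:
  assumes f: "f permutes {..<r}"
  shows "xi n r \<omega> (permute_list f i) (permute_list f j) = xi n r \<omega> i j"
proof (cases "i \<in> Iset n r \<and> j \<in> Iset n r")
  case True
  then have "wt (permute_list f i) (permute_list f j) = wt i j"
    using f by (intro wt_permute_list) (auto simp: Iset_def)
  then show ?thesis
    using f by (simp add: xi_def permute_list_in_Iset_iff)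
next
  case False
  then show ?thesis
    using f by (auto simp: xi_def permute_list_in_Iset_iff)
qed

lemma emult_permute_list:
  assumes f: "f permutes {..<r}"
    and A: "\<And>i j. A (permute_list f i) (permute_list f j) = A i j"
    and B: "\<And>i j. B (permute_list f i) (permute_list f j) = B i j"
  shows "emult n r A B (permute_list f i) (permute_list f l) = emult n r A B i l"
proof -
  have "emult n r A B (permute_list f i) (permute_list f l)
      = (\<Sum>j\<in>Iset n r. A (permute_list f i) (permute_list f j) * B (permute_list f j) (permute_list f l))"
    unfolding emult_def
    using sum.reindex_bij_betw[OF bij_betw_permute_list_Iset[OF f],
        of "\<lambda>j. A (permute_list f i) j * B j (permute_list f l)"]
    by simp
  also have "\<dots> = emult n r A B i l"
    by (simp add: emult_def A B)
  finally show ?thesis .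
qed

lemma emult_xi_eq_if_wt_eq:
  assumes I: "i \<in> Iset n r" "l \<in> Iset n r" "i' \<in> Iset n r" "l' \<in> Iset n r"
    and "wt i l = wt i' l'"
  shows "emult n r (xi n r \<omega>) (xi n r \<pi>) i l = emult n r (xi n r \<omega>) (xi n r \<pi>) i' l'"
proof -
  have len: "length i = r" "length l = r" "length i' = r" "length l' = r"
    using I by (simp_all add: Iset_def)
  obtain f where f: "f permutes {..<r}" "permute_list f i' = i" "permute_list f l' = l"
    using wt_eq_obtains_permutation[of i l i' l'] assms len by auto
  show ?thesis
    using emult_permute_list[OF f(1), of "xi n r \<omega>" "xi n r \<pi>" n i' l'] f
    by (simp add: xi_permute_list)
qed

lemma emult_xi_nonzero_obtains:
  assumes "emult n r (xi n r \<omega>) (xi n r \<pi>) i l \<noteq> (0 :: 'a::comm_ring_1)"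
  obtains j where "i \<in> Iset n r" "j \<in> Iset n r" "l \<in> Iset n r"
    and "wt i j = \<omega>" and "wt j l = \<pi>"
proof -
  obtain j where "j \<in> Iset n r" "xi n r \<omega> i j * xi n r \<pi> j l \<noteq> (0 :: 'a)"
    using assms unfolding emult_def by (rule sum.not_neutral_contains_not_neutral) blast
  then show thesis
    by (intro that) (auto simp: xi_def split: if_splits)
qed

lemma in_J_if_wt_determined:
  fixes M :: "nat list \<Rightarrow> nat list \<Rightarrow> 'a::comm_ring_1"
  assumes supp: "\<And>i l. M i l \<noteq> 0 \<Longrightarrow> i \<in> Iset n r \<and> l \<in> Iset n r \<and> wt i l \<in> Lambda_s u n r"
    and inv: "\<And>i l i' l'. \<lbrakk>i \<in> Iset n r; l \<in> Iset n r; i' \<in> Iset n r; l' \<in> Iset n r;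
                          wt i l = wt i' l'\<rbrakk> \<Longrightarrow> M i l = M i' l'"
  shows "M \<in> J u n r"
proof -
  define rep where "rep \<theta> = (SOME p. p \<in> Iset n r \<times> Iset n r \<and> wt (fst p) (snd p) = \<theta>)" for \<theta>
  define c where "c \<theta> = M (fst (rep \<theta>)) (snd (rep \<theta>))" for \<theta>
  have "M i l = (\<Sum>\<theta>\<in>Lambda_s u n r. c \<theta> * xi n r \<theta> i l)" for i l
  proof (cases "i \<in> Iset n r \<and> l \<in> Iset n r")
    case True
    have "rep (wt i l) \<in> Iset n r \<times> Iset n r \<and> wt (fst (rep (wt i l))) (snd (rep (wt i l))) = wt i l"
      unfolding rep_def by (rule someI[where x = "(i, l)"]) (use True in simp)
    then have c_wt: "c (wt i l) = M i l"
      unfolding c_def using True by (intro inv) auto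
    have "c \<theta> * xi n r \<theta> i l = (if \<theta> = wt i l then c \<theta> else 0)" for \<theta>
      using True by (simp add: xi_def)
    then have "(\<Sum>\<theta>\<in>Lambda_s u n r. c \<theta> * xi n r \<theta> i l)
        = (if wt i l \<in> Lambda_s u n r then M i l else 0)"
      using finite_Lambda_s c_wt by (simp add: sum.delta)
    then show ?thesis
      using supp by auto
  next
    case False
    then have "M i l = 0"
      using supp by blast
    moreover have "(\<Sum>\<theta>\<in>Lambda_s u n r. c \<theta> * xi n r \<theta> i l) = 0"
      using False by (intro sum.neutral) (auto simp: xi_def)
    ultimately show ?thesis
      by simp
  qed
  then show ?thesis
    unfolding J_def by blast
qed

theorem proposition4p2:
  fixes n r s t :: nat and \<omega> \<pi> :: "nat \<Rightarrow> nat \<Rightarrow> nat"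
  assumes "0 < n" and "0 < r"
    and "\<omega> \<in> Lambda_s s n r" and "\<pi> \<in> Lambda_s t n r"
  shows "emult n r (xi n r \<omega>) (xi n r \<pi> :: nat list \<Rightarrow> nat list \<Rightarrow> 'a::comm_ring_1)
           \<in> J (s + t) n r"
proof (rule in_J_if_wt_determined)
  fix i l
  assume "emult n r (xi n r \<omega>) (xi n r \<pi> :: nat list \<Rightarrow> nat list \<Rightarrow> 'a) i l \<noteq> 0"
  then obtain j where "i \<in> Iset n r" "j \<in> Iset n r" "l \<in> Iset n r"
    and "wt i j = \<omega>" "wt j l = \<pi>"
    by (rule emult_xi_nonzero_obtains)
  with assms show "i \<in> Iset n r \<and> l \<in> Iset n r \<and> wt i l \<in> Lambda_s (s + t) n r"
    using wt_in_Lambda_s_add by blast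
qed (rule emult_xi_eq_if_wt_eq)

end
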